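(* Let $K$ be a field, $P=K[x_1,\dots,x_n]$, and $\sigma$ a term ordering on $\mathbb{T}^n$. Let $J$ be an ideal in $P$ and let $F$ be a set of non-zero polynomials in $J$. Then: (a) $O_\sigma(J)=O_\sigma(F)$ if and only if $F$ is a $\sigma$-Gröbner basis of $J$; (b) if $F$ is not a $\sigma$-Gröbner basis of $J$, then $O_\sigma(J)\prec_\sigma O_\sigma(F)$.
   Context: $\mathbb{T}^n$ is the monoid of power-products in $x_1,\dots,x_n$. A tuple $(t_1,\dots,t_r)$ of distinct power-products is $\sigma$-ordered if $t_1<_\sigma\cdots<_\sigma t_r$ (the empty tuple is $\sigma$-ordered). The interreduction of a set $T$ of power-products is the set of elements of $T$ not divisible by any other element of $T$. For a set $F$ of non-zero polynomials, $O_\sigma(F)$ is the $\sigma$-ordered tuple of the interreduction of $\{\mathrm{LT}_\sigma(f):f\in F\}$. For an ideal $I$, $O_\sigma(I)$ is the $\sigma$-ordered tuple of the leading terms of a minimal $\sigma$-Gröbner basis of $I$ (equivalently, of the minimal power-product generators of $\mathrm{LT}_\sigma(I)$); it is the empty tuple if $I=0$. For $\sigma$-ordered tuples $T=(t_1,\dots,t_r)$ and $T'=(t'_1,\dots,t'_{r'})$, $T'\prec_\sigma T$ ($T'$ $\sigma$-precedes $T$) means either $T$ is a proper prefix of $T'$ (i.e. $r<r'$ and $t_i=t'_i$ for $i\le r$), or there is $k\le\min(r,r')$ with $t_i=t'_i$ for $i<k$ and $t'_k<_\sigma t_k$. *)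

theory Defs
  imports Main "HOL-Library.Poly_Mapping"
begin

(* Power-products in the variables of the finite type 'x (so n = CARD('x)) are
  finitely supported exponent vectors 'x \<Rightarrow>\<^sub>0 nat; multiplication of power-products
  is addition of exponent vectors, and 1 is 0.  Polynomials over K are
  ('x \<Rightarrow>\<^sub>0 nat) \<Rightarrow>\<^sub>0 K (finitely supported coefficient functions) with the
  convolution product from Poly_Mapping. *)

type_synonym 'x pp = "'x \<Rightarrow>\<^sub>0 nat"
type_synonym ('x, 'a) mpoly = "'x pp \<Rightarrow>\<^sub>0 'a"

definition pp_dvd :: "'x pp \<Rightarrow> 'x pp \<Rightarrow> bool" where
  "pp_dvd s t \<longleftrightarrow> (\<exists>u. t = s + u)"

definition term_ordering :: "('x pp \<Rightarrow> 'x pp \<Rightarrow> bool) \<Rightarrow> bool" where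
  "term_ordering le \<longleftrightarrow>
     (\<forall>t. le t t) \<and>
     (\<forall>s t. le s t \<and> le t s \<longrightarrow> s = t) \<and>
     (\<forall>s t u. le s t \<and> le t u \<longrightarrow> le s u) \<and>
     (\<forall>s t. le s t \<or> le t s) \<and>
     (\<forall>t. le 0 t) \<and>
     (\<forall>s t u. le s t \<longrightarrow> le (s + u) (t + u))"

definition lt_ord :: "('x pp \<Rightarrow> 'x pp \<Rightarrow> bool) \<Rightarrow> 'x pp \<Rightarrow> 'x pp \<Rightarrow> bool" where
  "lt_ord le s t \<longleftrightarrow> le s t \<and> s \<noteq> t"

definition LT :: "('x pp \<Rightarrow> 'x pp \<Rightarrow> bool) \<Rightarrow> ('x, 'a::zero) mpoly \<Rightarrow> 'x pp" where
  "LT le f = (THE t. t \<in> Poly_Mapping.keys f \<and> (\<forall>s \<in> Poly_Mapping.keys f. le s t))"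

definition is_ideal :: "('x, 'a::comm_ring_1) mpoly set \<Rightarrow> bool" where
  "is_ideal J \<longleftrightarrow> 0 \<in> J \<and> (\<forall>f\<in>J. \<forall>g\<in>J. f + g \<in> J) \<and> (\<forall>p f. f \<in> J \<longrightarrow> p * f \<in> J)"

definition groebner_basis ::
  "('x pp \<Rightarrow> 'x pp \<Rightarrow> bool) \<Rightarrow> ('x, 'a::comm_ring_1) mpoly set \<Rightarrow> ('x, 'a) mpoly set \<Rightarrow> bool" where
  "groebner_basis le F J \<longleftrightarrow> F \<subseteq> J - {0} \<and>
     (\<forall>f\<in>J - {0}. \<exists>g\<in>F. pp_dvd (LT le g) (LT le f))"

definition interreduction :: "'x pp set \<Rightarrow> 'x pp set" where
  "interreduction T = {t \<in> T. \<not> (\<exists>s\<in>T. s \<noteq> t \<and> pp_dvd s t)}"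

definition sigma_ordered :: "('x pp \<Rightarrow> 'x pp \<Rightarrow> bool) \<Rightarrow> 'x pp list \<Rightarrow> bool" where
  "sigma_ordered le ts \<longleftrightarrow> sorted_wrt (lt_ord le) ts"

definition ordered_tuple :: "('x pp \<Rightarrow> 'x pp \<Rightarrow> bool) \<Rightarrow> 'x pp set \<Rightarrow> 'x pp list" where
  "ordered_tuple le T = (THE ts. sigma_ordered le ts \<and> set ts = T)"

definition O_set :: "('x pp \<Rightarrow> 'x pp \<Rightarrow> bool) \<Rightarrow> ('x, 'a::zero) mpoly set \<Rightarrow> 'x pp list" where
  "O_set le F = ordered_tuple le (interreduction (LT le ` F))"

(* O_sigma(I) for an ideal I: the sigma-ordered tuple of the minimal power-product
  generators of LT_sigma(I) = monoid ideal generated by the leading terms of the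
  non-zero elements of I (empty if I = 0). *)
definition O_ideal :: "('x pp \<Rightarrow> 'x pp \<Rightarrow> bool) \<Rightarrow> ('x, 'a::zero) mpoly set \<Rightarrow> 'x pp list" where
  "O_ideal le I = ordered_tuple le
     {t. (\<exists>f\<in>I - {0}. pp_dvd (LT le f) t) \<and>
         \<not> (\<exists>s. s \<noteq> t \<and> pp_dvd s t \<and> (\<exists>f\<in>I - {0}. pp_dvd (LT le f) s))}"

definition sigma_precedes :: "('x pp \<Rightarrow> 'x pp \<Rightarrow> bool) \<Rightarrow> 'x pp list \<Rightarrow> 'x pp list \<Rightarrow> bool" where
  "sigma_precedes le T' T \<longleftrightarrow>
     (length T < length T' \<and> take (length T) T' = T) \<or>
     (\<exists>k < min (length T) (length T'). take k T' = take k T \<and> lt_ord le (T' ! k) (T ! k))"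

end

theory Submission
  imports Defs "HOL-Library.Ramsey"
begin

(* Let G be the set of minimal generators of the monoid ideal LT(J) of leading terms of
  J - {0}, and M the interreduction of LT(F).  Since LT(F) is contained in LT(J), every
  m in M is divisible by some g in G, and g = m as soon as g also lies in M; by Dickson's
  lemma both sets are finite.  F is a Groebner basis iff LT(F) generates LT(J), which
  happens iff G = M.  Otherwise, reading both sorted tuples from the left, the first
  place where they differ carries an element of G that is sigma-smaller than the
  corresponding element of M, or M is exhausted first.  Only divisibility of leading terms
  enters: the ideal property of J and the coefficient field play no role. *)

lemma pp_dvd_refl: "pp_dvd t t"
  unfolding pp_dvd_def by (metis add.right_neutral)

lemma pp_dvd_trans: "pp_dvd s t \<Longrightarrow> pp_dvd t u \<Longrightarrow> pp_dvd s u"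
  unfolding pp_dvd_def by (metis add.assoc)

lemma pp_dvd_iff_lookup_le: "pp_dvd s t \<longleftrightarrow> (\<forall>x. Poly_Mapping.lookup s x \<le> Poly_Mapping.lookup t x)"
proof
  assume "pp_dvd s t"
  then show "\<forall>x. Poly_Mapping.lookup s x \<le> Poly_Mapping.lookup t x"
    unfolding pp_dvd_def by (auto simp: lookup_add)
next
  assume le: "\<forall>x. Poly_Mapping.lookup s x \<le> Poly_Mapping.lookup t x"
  have "t = s + (t - s)"
    by (rule poly_mapping_eqI) (simp add: lookup_add lookup_minus le)
  then show "pp_dvd s t"
    unfolding pp_dvd_def by blast
qed

lemma finite_pp_antichain:
  fixes A :: "'x::finite pp set"
  assumes antichain: "\<And>s t. s \<in> A \<Longrightarrow> t \<in> A \<Longrightarrow> pp_dvd s t \<Longrightarrow> s = t"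
  shows "finite A"
proof (rule ccontr)
  (* Ramsey's theorem for the colouring {i < j} \<mapsto> {x. p i has exponent \<le> that of p j at x}
    gives an infinite monochromatic Y.  If its colour is every variable, two elements of A
    divide each other; otherwise some exponent strictly decreases along Y. *)
  assume "infinite A"
  then obtain p :: "nat \<Rightarrow> 'x pp" where p: "inj p" "range p \<subseteq> A"
    using infinite_countable_subset by blast
  define up where "up i j = {x. Poly_Mapping.lookup (p i) x \<le> Poly_Mapping.lookup (p j) x}" for i j
  obtain code :: "'x set \<Rightarrow> nat" and n where code: "range code = {i. i < n}" "inj code"
    using finite_imp_inj_to_nat_seg[of "UNIV :: 'x set set"] by auto
  have "\<forall>i\<in>UNIV. \<forall>j\<in>UNIV. i \<noteq> j \<longrightarrow> code (up (Min {i, j}) (Max {i, j})) < n"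
    using code(1) by blast
  from Ramsey2[OF infinite_UNIV_nat this] obtain Y c where Y: "infinite Y"
    and c: "\<forall>i\<in>Y. \<forall>j\<in>Y. i \<noteq> j \<longrightarrow> code (up (Min {i, j}) (Max {i, j})) = c"
    by blast
  define q where "q = enumerate Y"
  have q: "q k \<in> Y" "q k < q (Suc k)" for k
    using Y by (simp_all add: q_def enumerate_in_set enumerate_step)
  have code_up: "code (up i j) = c" if "i \<in> Y" "j \<in> Y" "i < j" for i j
  proof -
    have "code (up (Min {i, j}) (Max {i, j})) = c"
      using c[rule_format, OF that(1,2) less_imp_neq[OF that(3)]] .
    then show ?thesis
      using \<open>i < j\<close> by (simp add: min.absorb1 max.absorb2)
  qed
  have up_const: "up (q k) (q (Suc k)) = up (q 0) (q (Suc 0))" for k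
    by (rule injD[OF code(2)]) (simp add: code_up q)
  show False
  proof (cases "up (q 0) (q (Suc 0)) = UNIV")
    case True
    then have "pp_dvd (p (q 0)) (p (q (Suc 0)))"
      by (simp add: pp_dvd_iff_lookup_le up_def set_eq_iff)
    then have "p (q 0) = p (q (Suc 0))"
      using antichain p(2) by (meson rangeI subsetD)
    then have "q 0 = q (Suc 0)"
      using p(1) by (simp add: inj_eq)
    then show False
      using q(2)[of 0] by simp
  next
    case False
    then obtain x where x: "x \<notin> up (q 0) (q (Suc 0))" by blast
    define h where "h k = Poly_Mapping.lookup (p (q k)) x" for k
    have "h (Suc k) < h k" for k
    proof -
      have "x \<notin> up (q k) (q (Suc k))"
        using x up_const[of k] by simp
      then show ?thesis
        by (simp add: up_def h_def)
    qed
    then have "\<exists>f. \<forall>k. (f (Suc k), f k) \<in> {(a, b::nat). a < b}"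
      by blast
    with wf_less show False
      unfolding wf_iff_no_infinite_down_chain by (rule notE)
  qed
qed

definition pp_degree :: "'x::finite pp \<Rightarrow> nat" where
  "pp_degree t = (\<Sum>x\<in>UNIV. Poly_Mapping.lookup t x)"

lemma pp_degree_less:
  fixes s t :: "'x::finite pp"
  assumes "pp_dvd s t" "s \<noteq> t"
  shows "pp_degree s < pp_degree t"
proof -
  obtain u where u: "t = s + u"
    using assms(1) unfolding pp_dvd_def by blast
  with assms(2) obtain x where x: "Poly_Mapping.lookup u x \<noteq> 0"
    by (metis add.right_neutral lookup_zero poly_mapping_eqI)
  have "pp_degree t = pp_degree s + pp_degree u"
    unfolding pp_degree_def u by (simp add: lookup_add sum.distrib)
  moreover have "pp_degree u > 0"
    unfolding pp_degree_def using x by (simp add: sum_pos2[where i = x])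
  ultimately show ?thesis by simp
qed

lemma pp_dvd_antisym:
  fixes s t :: "'x::finite pp"
  assumes "pp_dvd s t" "pp_dvd t s"
  shows "s = t"
proof (rule ccontr)
  assume ne: "s \<noteq> t"
  have "pp_degree s < pp_degree t"
    using assms(1) ne by (rule pp_degree_less)
  moreover have "pp_degree t < pp_degree s"
    using assms(2) ne[symmetric] by (rule pp_degree_less)
  ultimately show False by simp
qed

lemma finite_interreduction: "finite (interreduction (T :: 'x::finite pp set))"
  by (rule finite_pp_antichain) (auto simp: interreduction_def)

lemma interreduction_antichain:
  "s \<in> interreduction T \<Longrightarrow> t \<in> interreduction T \<Longrightarrow> pp_dvd s t \<Longrightarrow> s = t"
  unfolding interreduction_def by blast

lemma interreduction_dvd:
  fixes T :: "'x::finite pp set"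
  assumes "t \<in> T"
  shows "\<exists>s\<in>interreduction T. pp_dvd s t"
proof -
  obtain s where s: "s \<in> T" "pp_dvd s t"
    and least: "\<And>s'. s' \<in> T \<Longrightarrow> pp_dvd s' t \<Longrightarrow> pp_degree s \<le> pp_degree s'"
    using ex_has_least_nat[of "\<lambda>s. s \<in> T \<and> pp_dvd s t" t pp_degree] assms pp_dvd_refl
    by blast
  have "\<not> (\<exists>s'\<in>T. s' \<noteq> s \<and> pp_dvd s' s)"
  proof
    assume "\<exists>s'\<in>T. s' \<noteq> s \<and> pp_dvd s' s"
    then obtain s' where s': "s' \<in> T" "s' \<noteq> s" "pp_dvd s' s" by blast
    then have "pp_degree s' < pp_degree s"
      using pp_degree_less by blast
    moreover have "pp_degree s \<le> pp_degree s'"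
      using least[OF s'(1) pp_dvd_trans[OF s'(3) s(2)]] .
    ultimately show False by simp
  qed
  with s show ?thesis
    unfolding interreduction_def by blast
qed

lemma interreduction_subset: "interreduction T \<subseteq> T"
  unfolding interreduction_def by blast

lemma interreduction_eq_iff:
  fixes S T :: "'x::finite pp set"
  assumes "S \<subseteq> T"
  shows "interreduction T = interreduction S \<longleftrightarrow> (\<forall>t\<in>T. \<exists>s\<in>S. pp_dvd s t)"
proof
  assume eq: "interreduction T = interreduction S"
  show "\<forall>t\<in>T. \<exists>s\<in>S. pp_dvd s t"
  proof
    fix t assume "t \<in> T"
    then obtain s where "s \<in> interreduction T" "pp_dvd s t"
      using interreduction_dvd by blast
    then show "\<exists>s\<in>S. pp_dvd s t"
      using eq interreduction_subset by blast
  qed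
next
  assume dvd: "\<forall>t\<in>T. \<exists>s\<in>S. pp_dvd s t"
  show "interreduction T = interreduction S"
  proof (intro set_eqI iffI)
    fix t assume t: "t \<in> interreduction T"
    then obtain s where s: "s \<in> S" "pp_dvd s t"
      using dvd interreduction_subset by blast
    then have "s = t"
      using t assms unfolding interreduction_def by auto
    with s have "t \<in> S" by simp
    with t assms show "t \<in> interreduction S"
      unfolding interreduction_def by blast
  next
    fix t assume t: "t \<in> interreduction S"
    have "\<not> (\<exists>s\<in>T. s \<noteq> t \<and> pp_dvd s t)"
    proof
      assume "\<exists>s\<in>T. s \<noteq> t \<and> pp_dvd s t"
      then obtain s where s: "s \<in> T" "s \<noteq> t" "pp_dvd s t" by blast
      obtain s' where s': "s' \<in> S" "pp_dvd s' s"
        using dvd s(1) by blast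
      have "s' = t"
        using t s'(1) pp_dvd_trans[OF s'(2) s(3)] by (auto simp: interreduction_def)
      then have "s = t"
        using pp_dvd_antisym[OF s(3)] s'(2) by simp
      with s(2) show False ..
    qed
    moreover have "t \<in> T"
      using t assms interreduction_subset by blast
    ultimately show "t \<in> interreduction T"
      by (simp add: interreduction_def)
  qed
qed

lemma interreduction_dominated:
  fixes S T :: "'x::finite pp set"
  assumes "S \<subseteq> T" "m \<in> interreduction S"
  shows "\<exists>g\<in>interreduction T. pp_dvd g m \<and> (g \<in> interreduction S \<longrightarrow> g = m)"
proof -
  have "m \<in> T"
    using assms interreduction_subset by blast
  then obtain g where "g \<in> interreduction T" "pp_dvd g m"
    using interreduction_dvd by blast
  with assms(2) show ?thesis
    using interreduction_antichain by blast
qed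

lemma linorder_term_ordering:
  assumes "term_ordering le"
  shows "class.linorder le (lt_ord le)"
  using assms unfolding term_ordering_def lt_ord_def
  by unfold_locales blast+

lemma term_ordering_dvd_imp_le:
  assumes "term_ordering le" "pp_dvd s t"
  shows "le s t"
proof -
  obtain u where "t = s + u"
    using assms(2) unfolding pp_dvd_def by blast
  moreover have "le (0 + s) (u + s)"
    using assms(1) unfolding term_ordering_def by blast
  ultimately show ?thesis
    by (simp add: add.commute)
qed

lemma ordered_tuple:
  assumes "class.linorder le (lt_ord le)" "finite T"
  shows "sorted_wrt (lt_ord le) (ordered_tuple le T)" "set (ordered_tuple le T) = T"
  using theI'[OF linorder.ex1_sorted_list_for_set_if_finite[OF assms]]
  unfolding ordered_tuple_def sigma_ordered_def by simp_all

lemma ordered_tuple_inject: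
  assumes "class.linorder le (lt_ord le)" "finite A" "finite B"
  shows "ordered_tuple le A = ordered_tuple le B \<longleftrightarrow> A = B"
  using ordered_tuple(2)[OF assms(1,2)] ordered_tuple(2)[OF assms(1,3)] by metis

lemma sigma_precedes_Cons:
  assumes "sigma_precedes le xs ys"
  shows "sigma_precedes le (x # xs) (x # ys)"
proof -
  consider (prefix) "length ys < length xs" "take (length ys) xs = ys"
    | (differ) k where "k < min (length ys) (length xs)" "take k xs = take k ys"
      "lt_ord le (xs ! k) (ys ! k)"
    using assms unfolding sigma_precedes_def by blast
  then show ?thesis
  proof cases
    case prefix
    then show ?thesis by (simp add: sigma_precedes_def)
  next
    case (differ k)
    then show ?thesis
      unfolding sigma_precedes_def by (intro disjI2 exI[of _ "Suc k"]) simp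
  qed
qed

lemma sigma_precedes_if_dominated:
  assumes lin: "class.linorder le (lt_ord le)"
    and "sorted_wrt (lt_ord le) gs" "sorted_wrt (lt_ord le) ms" "gs \<noteq> ms"
    and "\<And>m. m \<in> set ms \<Longrightarrow> \<exists>g\<in>set gs. le g m \<and> (g \<in> set ms \<longrightarrow> g = m)"
  shows "sigma_precedes le gs ms"
  using assms(2-)
proof (induction ms arbitrary: gs)
  case Nil
  then show ?case by (simp add: sigma_precedes_def)
next
  case (Cons m ms)
  interpret ord: linorder le "lt_ord le" by (fact lin)
  obtain g where g: "g \<in> set gs" "le g m" "g \<in> set (m # ms) \<longrightarrow> g = m"
    using Cons.prems(4)[of m] by auto
  then obtain g0 gs' where gs: "gs = g0 # gs'"
    by (cases gs) auto
  have "le g0 g"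
    using g(1) Cons.prems(1) unfolding gs by (auto simp: lt_ord_def)
  from this g(2) have "le g0 m"
    by (rule ord.order_trans)
  show ?case
  proof (cases "g0 = m")
    case True
    have "m \<notin> set ms"
      using Cons.prems(2) by (auto simp: lt_ord_def)
    have "\<exists>g\<in>set gs'. le g m' \<and> (g \<in> set ms \<longrightarrow> g = m')" if "m' \<in> set ms" for m'
    proof -
      have "m' \<in> set (m # ms)"
        using that by simp
      then obtain g' where g': "g' \<in> set gs" "le g' m'" "g' \<in> set (m # ms) \<longrightarrow> g' = m'"
        using Cons.prems(4) by blast
      have "g' \<noteq> g0"
        using g'(3) True that \<open>m \<notin> set ms\<close> by auto
      with g' show ?thesis
        unfolding gs by auto
    qed
    with Cons.prems have "sigma_precedes le gs' ms"
      unfolding gs True by (intro Cons.IH) auto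
    then show ?thesis
      unfolding gs True by (rule sigma_precedes_Cons)
  next
    case False
    with \<open>le g0 m\<close> show ?thesis
      unfolding gs sigma_precedes_def by (intro disjI2 exI[of _ 0]) (simp add: lt_ord_def)
  qed
qed

lemma ordered_tuple_interreduction_precedes:
  fixes S T :: "'x::finite pp set"
  assumes "term_ordering le" "S \<subseteq> T" "interreduction T \<noteq> interreduction S"
  shows "sigma_precedes le (ordered_tuple le (interreduction T)) (ordered_tuple le (interreduction S))"
proof -
  have lin: "class.linorder le (lt_ord le)"
    using assms(1) by (rule linorder_term_ordering)
  note set_tuple = ordered_tuple(2)[OF lin finite_interreduction]
  show ?thesis
  proof (rule sigma_precedes_if_dominated[OF lin])
    show "sorted_wrt (lt_ord le) (ordered_tuple le (interreduction T))"
      "sorted_wrt (lt_ord le) (ordered_tuple le (interreduction S))"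
      by (rule ordered_tuple(1)[OF lin finite_interreduction])+
    show "ordered_tuple le (interreduction T) \<noteq> ordered_tuple le (interreduction S)"
      using assms(3) set_tuple by metis
    fix m assume "m \<in> set (ordered_tuple le (interreduction S))"
    then obtain g where "g \<in> interreduction T" "pp_dvd g m" "g \<in> interreduction S \<longrightarrow> g = m"
      using interreduction_dominated[OF assms(2)] set_tuple by blast
    then show "\<exists>g\<in>set (ordered_tuple le (interreduction T)).
        le g m \<and> (g \<in> set (ordered_tuple le (interreduction S)) \<longrightarrow> g = m)"
      using term_ordering_dvd_imp_le[OF assms(1)] set_tuple by auto
  qed
qed

definition lt_ideal :: "('x pp \<Rightarrow> 'x pp \<Rightarrow> bool) \<Rightarrow> ('x, 'a::zero) mpoly set \<Rightarrow> 'x pp set" where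
  "lt_ideal le J = {t. \<exists>f\<in>J - {0}. pp_dvd (LT le f) t}"

lemma O_ideal_eq_interreduction_lt_ideal:
  "O_ideal le J = ordered_tuple le (interreduction (lt_ideal le J))"
  unfolding O_ideal_def interreduction_def lt_ideal_def
  by (rule arg_cong[where f = "ordered_tuple le"]) blast

lemma LT_image_subset_lt_ideal:
  assumes "F \<subseteq> J - {0}"
  shows "LT le ` F \<subseteq> lt_ideal le J"
  using assms pp_dvd_refl unfolding lt_ideal_def by blast

lemma groebner_basis_iff_dvd_lt_ideal:
  assumes "F \<subseteq> J - {0}"
  shows "groebner_basis le F J \<longleftrightarrow> (\<forall>t\<in>lt_ideal le J. \<exists>s\<in>LT le ` F. pp_dvd s t)"
proof
  assume "groebner_basis le F J"
  then show "\<forall>t\<in>lt_ideal le J. \<exists>s\<in>LT le ` F. pp_dvd s t"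
    unfolding groebner_basis_def lt_ideal_def by (blast intro: pp_dvd_trans)
next
  assume "\<forall>t\<in>lt_ideal le J. \<exists>s\<in>LT le ` F. pp_dvd s t"
  then show "groebner_basis le F J"
    using assms pp_dvd_refl unfolding groebner_basis_def lt_ideal_def by blast
qed

theorem proposition4p6:
  fixes le :: "'x::finite pp \<Rightarrow> 'x pp \<Rightarrow> bool"
    and J F :: "('x, 'a::field) mpoly set"
  assumes "term_ordering le"
    and "is_ideal J"
    and "F \<subseteq> J"
    and "0 \<notin> F"
  shows "(O_ideal le J = O_set le F \<longleftrightarrow> groebner_basis le F J)
     \<and> (\<not> groebner_basis le F J \<longrightarrow> sigma_precedes le (O_ideal le J) (O_set le F))"
proof -
  have F: "F \<subseteq> J - {0}"
    using assms(3,4) by blast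
  then have sub: "LT le ` F \<subseteq> lt_ideal le J"
    by (rule LT_image_subset_lt_ideal)
  have O: "O_ideal le J = ordered_tuple le (interreduction (lt_ideal le J))"
    "O_set le F = ordered_tuple le (interreduction (LT le ` F))"
    by (simp_all add: O_ideal_eq_interreduction_lt_ideal O_set_def)
  have GB: "groebner_basis le F J \<longleftrightarrow> interreduction (lt_ideal le J) = interreduction (LT le ` F)"
    unfolding groebner_basis_iff_dvd_lt_ideal[OF F] interreduction_eq_iff[OF sub] ..
  have eq: "O_ideal le J = O_set le F \<longleftrightarrow> interreduction (lt_ideal le J) = interreduction (LT le ` F)"
    unfolding O using ordered_tuple_inject[OF linorder_term_ordering[OF assms(1)] finite_interreduction
      finite_interreduction] .
  show ?thesis
    using GB eq ordered_tuple_interreduction_precedes[OF assms(1) sub] unfolding O by blast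
qed

end
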